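(* Let $\Omega\subset\mathbb{R}^2$ be a domain with coordinates $(x,y)$ and let $r:\Omega\to S^5\subset\mathbb{C}^3$ be a smooth map such that $\psi=\mathcal{H}\circ r:\Omega\to\mathbb{C}P^2$ is a conformal Lagrangian immersion and $$\langle r,r_x\rangle=\langle r,r_y\rangle=\langle r_x,r_y\rangle=0,\qquad |r_x|=|r_y|=e^{v},$$ so that $e^{2v(x,y)}(dx^2+dy^2)$ is the induced metric. Let $\beta:\Omega\to\mathbb{R}$ be a smooth function (the Lagrangian angle) such that the matrix with rows $e^{i\beta}r,\ e^{-v}r_x,\ e^{-v}r_y$ lies in $\mathrm{SU}(3)$. Define real functions $f,g$ by $$if=\langle \partial_x(e^{-v}r_y),e^{-v}r_y\rangle,\qquad ig=\langle\partial_y(e^{-v}r_x),e^{-v}r_x\rangle,$$ and set $U=fe^{2v}$, $V=ge^{2v}$. Then $$U_y+V_x+e^{2v}\beta_{xy}=0,$$ $$V_y+v_ye^{2v}\beta_y=U_x+v_xe^{2v}\beta_x,$$ $$\Delta v+e^{2v}-2(U^2+V^2)e^{-4v}-(\beta_xU+\beta_yV)e^{-2v}=0,$$ where $\Delta=\partial_x^2+\partial_y^2$.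
   Context: $S^5$ is the unit sphere in $\mathbb{C}^3$, $\mathcal{H}:S^5\to\mathbb{C}P^2$ is the Hopf fibration, and $\langle u,w\rangle=\sum_{j=1}^3u_j\bar w_j$ is the standard Hermitian product on $\mathbb{C}^3$, $|u|^2=\langle u,u\rangle$. An immersion into $\mathbb{C}P^2$ is Lagrangian if the pullback of the Fubini–Study form vanishes, and conformal if its induced metric is a multiple of $dx^2+dy^2$; the stated orthogonality relations hold for a horizontal lift $r$ of such an immersion. *)

theory Defs
  imports "HOL-Analysis.Analysis"
begin

definition herm :: "complex^3 \<Rightarrow> complex^3 \<Rightarrow> complex" where
  "herm u w = (\<Sum>j\<in>UNIV. u$j * cnj (w$j))"

definition px :: "(real \<times> real \<Rightarrow> 'a::real_normed_vector) \<Rightarrow> real \<times> real \<Rightarrow> 'a" where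
  "px F p = vector_derivative (\<lambda>t. F (t, snd p)) (at (fst p))"

definition py :: "(real \<times> real \<Rightarrow> 'a::real_normed_vector) \<Rightarrow> real \<times> real \<Rightarrow> 'a" where
  "py F p = vector_derivative (\<lambda>t. F (fst p, t)) (at (snd p))"

fun pd :: "bool list \<Rightarrow> (real \<times> real \<Rightarrow> 'a::real_normed_vector) \<Rightarrow> real \<times> real \<Rightarrow> 'a" where
  "pd [] F = F"
| "pd (b # bs) F = (if b then px else py) (pd bs F)"

definition smooth_on :: "(real \<times> real) set \<Rightarrow> (real \<times> real \<Rightarrow> 'a::real_normed_vector) \<Rightarrow> bool" where
  "smooth_on S F \<longleftrightarrow> (\<forall>bs. pd bs F differentiable_on S)"

definition cnj_transpose :: "complex^3^3 \<Rightarrow> complex^3^3" where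
  "cnj_transpose A = (\<chi> i j. cnj (A$j$i))"

definition SU3 :: "complex^3^3 \<Rightarrow> bool" where
  "SU3 A \<longleftrightarrow> A ** cnj_transpose A = mat 1 \<and> det A = 1"

end

theory Submission
  imports Defs
begin

text \<open>
  The rows e0 = exp(i beta) r, e1 = exp(-v) r_x, e2 = exp(-v) r_y form a moving frame F with
  values in SU(3). Its connection matrices omega_x = F_x F^*, omega_y = F_y F^* are
  antihermitian because F is unitary and traceless because det F = 1; together with
  r_x = exp(v) e1, r_y = exp(v) e2 and r_xy = r_yx this expresses all their entries through
  v, beta, f and g. The symmetry F_xy = F_yx turns into the zero-curvature equation
  d_y omega_x - d_x omega_y = omega_x omega_y^* - omega_y omega_x^*: the imaginary parts of
  its (2,2) and (2,3) entries are the first two equations of the theorem, and the real part of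
  the (2,3) entry is the third one, the Gauss equation.
\<close>

section \<open>Partial derivatives\<close>

lemma has_vector_derivative_x_line:
  assumes "(F has_derivative F') (at p)"
  shows "((\<lambda>t. F (t, snd p)) has_vector_derivative F' (1, 0)) (at (fst p))"
proof -
  have "((\<lambda>t. (t, snd p)) has_derivative (\<lambda>t. (t, 0))) (at (fst p))"
    by (auto intro!: derivative_eq_intros)
  from has_derivative_compose[OF this, of F F'] assms
  have "((\<lambda>t. F (t, snd p)) has_derivative (\<lambda>t. F' (t, 0))) (at (fst p))"
    by simp
  moreover have "(\<lambda>t. F' (t, 0)) = (\<lambda>t. t *\<^sub>R F' (1, 0))"
  proof
    fix t
    show "F' (t, 0) = t *\<^sub>R F' (1, 0)"
      using linear_scale[OF has_derivative_linear[OF assms], of t "(1, 0)"] by simp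
  qed
  ultimately show ?thesis
    by (simp add: has_vector_derivative_def)
qed

lemma has_vector_derivative_y_line:
  assumes "(F has_derivative F') (at p)"
  shows "((\<lambda>t. F (fst p, t)) has_vector_derivative F' (0, 1)) (at (snd p))"
proof -
  have "((\<lambda>t. (fst p, t)) has_derivative (\<lambda>t. (0, t))) (at (snd p))"
    by (auto intro!: derivative_eq_intros)
  from has_derivative_compose[OF this, of F F'] assms
  have "((\<lambda>t. F (fst p, t)) has_derivative (\<lambda>t. F' (0, t))) (at (snd p))"
    by simp
  moreover have "(\<lambda>t. F' (0, t)) = (\<lambda>t. t *\<^sub>R F' (0, 1))"
  proof
    fix t
    show "F' (0, t) = t *\<^sub>R F' (0, 1)"
      using linear_scale[OF has_derivative_linear[OF assms], of t "(0, 1)"] by simp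
  qed
  ultimately show ?thesis
    by (simp add: has_vector_derivative_def)
qed

lemma px_eq_derivative: "(F has_derivative F') (at p) \<Longrightarrow> px F p = F' (1, 0)"
  unfolding px_def by (rule vector_derivative_at[OF has_vector_derivative_x_line])

lemma py_eq_derivative: "(F has_derivative F') (at p) \<Longrightarrow> py F p = F' (0, 1)"
  unfolding py_def by (rule vector_derivative_at[OF has_vector_derivative_y_line])

lemma has_vector_derivative_px:
  assumes "F differentiable (at p)"
  shows "((\<lambda>t. F (t, snd p)) has_vector_derivative px F p) (at (fst p))"
proof -
  obtain F' where "(F has_derivative F') (at p)"
    using assms by (auto simp: differentiable_def)
  then show ?thesis
    using has_vector_derivative_x_line px_eq_derivative by metis
qed

lemma has_vector_derivative_py:
  assumes "F differentiable (at p)"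
  shows "((\<lambda>t. F (fst p, t)) has_vector_derivative py F p) (at (snd p))"
proof -
  obtain F' where "(F has_derivative F') (at p)"
    using assms by (auto simp: differentiable_def)
  then show ?thesis
    using has_vector_derivative_y_line py_eq_derivative by metis
qed

lemma has_derivative_partials:
  assumes "F differentiable (at p)"
  shows "(F has_derivative (\<lambda>h. fst h *\<^sub>R px F p + snd h *\<^sub>R py F p)) (at p)"
proof -
  obtain F' where F': "(F has_derivative F') (at p)"
    using assms by (auto simp: differentiable_def)
  show ?thesis
  proof (rule has_derivative_eq_rhs[OF F'], rule ext)
    fix h :: "real \<times> real"
    have "F' h = F' (fst h, 0) + F' (0, snd h)"
      using linear_add[OF has_derivative_linear[OF F'], of "(fst h, 0)" "(0, snd h)"] by simp
    also have "\<dots> = fst h *\<^sub>R F' (1, 0) + snd h *\<^sub>R F' (0, 1)"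
      using linear_scale[OF has_derivative_linear[OF F'], of "fst h" "(1, 0)"]
        linear_scale[OF has_derivative_linear[OF F'], of "snd h" "(0, 1)"] by simp
    finally show "F' h = fst h *\<^sub>R px F p + snd h *\<^sub>R py F p"
      by (simp only: px_eq_derivative[OF F'] py_eq_derivative[OF F'])
  qed
qed

lemma px_bilinear:
  assumes "bounded_bilinear m" "A differentiable (at p)" "B differentiable (at p)"
  shows "px (\<lambda>q. m (A q) (B q)) p = m (px A p) (B p) + m (A p) (px B p)"
  using px_eq_derivative[OF bounded_bilinear.FDERIV[OF assms(1)
        has_derivative_partials[OF assms(2)] has_derivative_partials[OF assms(3)]]]
  by simp

lemma py_bilinear:
  assumes "bounded_bilinear m" "A differentiable (at p)" "B differentiable (at p)"
  shows "py (\<lambda>q. m (A q) (B q)) p = m (py A p) (B p) + m (A p) (py B p)"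
  using py_eq_derivative[OF bounded_bilinear.FDERIV[OF assms(1)
        has_derivative_partials[OF assms(2)] has_derivative_partials[OF assms(3)]]]
  by simp

lemma px_linear:
  assumes "bounded_linear L" "A differentiable (at p)"
  shows "px (\<lambda>q. L (A q)) p = L (px A p)"
  using px_eq_derivative[OF bounded_linear.has_derivative[OF assms(1) has_derivative_partials[OF assms(2)]]]
  by (simp add: linear_simps[OF assms(1)])

lemma py_linear:
  assumes "bounded_linear L" "A differentiable (at p)"
  shows "py (\<lambda>q. L (A q)) p = L (py A p)"
  using py_eq_derivative[OF bounded_linear.has_derivative[OF assms(1) has_derivative_partials[OF assms(2)]]]
  by (simp add: linear_simps[OF assms(1)])

lemma px_add:
  assumes "A differentiable (at p)" "B differentiable (at p)"
  shows "px (\<lambda>q. A q + B q) p = px A p + px B p"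
  using px_eq_derivative[OF has_derivative_add[OF has_derivative_partials[OF assms(1)]
        has_derivative_partials[OF assms(2)]]]
  by simp

lemma py_add:
  assumes "A differentiable (at p)" "B differentiable (at p)"
  shows "py (\<lambda>q. A q + B q) p = py A p + py B p"
  using py_eq_derivative[OF has_derivative_add[OF has_derivative_partials[OF assms(1)]
        has_derivative_partials[OF assms(2)]]]
  by simp

lemma px_nth:
  "F differentiable (at p) \<Longrightarrow> px F p $ i = px (\<lambda>q. F q $ i) p"
  using px_linear[OF bounded_linear_vec_nth] by metis

lemma py_nth:
  "F differentiable (at p) \<Longrightarrow> py F p $ i = py (\<lambda>q. F q $ i) p"
  using py_linear[OF bounded_linear_vec_nth] by metis

lemma has_derivative_exp_compose:
  fixes a :: "real \<times> real \<Rightarrow> 'a::{banach,real_normed_field}"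
  assumes "(a has_derivative a') (at p)"
  shows "((\<lambda>q. exp (a q)) has_derivative (\<lambda>h. exp (a p) * a' h)) (at p)"
proof -
  have "(exp has_derivative (\<lambda>h. exp (a p) * h)) (at (a p))"
    using DERIV_exp[of "a p"] by (simp add: has_field_derivative_def)
  then show ?thesis
    by (rule has_derivative_compose[OF assms])
qed

lemma differentiable_exp_compose:
  fixes a :: "real \<times> real \<Rightarrow> 'a::{banach,real_normed_field}"
  assumes "a differentiable (at p)"
  shows "(\<lambda>q. exp (a q)) differentiable (at p)"
  using assms has_derivative_exp_compose unfolding differentiable_def by blast

lemma px_exp:
  fixes a :: "real \<times> real \<Rightarrow> 'a::{banach,real_normed_field}"
  assumes "a differentiable (at p)"
  shows "px (\<lambda>q. exp (a q)) p = exp (a p) * px a p"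
  using px_eq_derivative[OF has_derivative_exp_compose[OF has_derivative_partials[OF assms]]]
  by simp

lemma py_exp:
  fixes a :: "real \<times> real \<Rightarrow> 'a::{banach,real_normed_field}"
  assumes "a differentiable (at p)"
  shows "py (\<lambda>q. exp (a q)) p = exp (a p) * py a p"
  using py_eq_derivative[OF has_derivative_exp_compose[OF has_derivative_partials[OF assms]]]
  by simp

lemma px_mult_exp2:
  fixes h w :: "real \<times> real \<Rightarrow> real"
  assumes "h differentiable (at p)" "w differentiable (at p)"
  shows "px (\<lambda>q. h q * exp (2 * w q)) p = exp (2 * w p) * (px h p + 2 * h p * px w p)"
  by (rule px_eq_derivative[THEN trans],
      (rule derivative_eq_intros has_derivative_partials assms refl)+) (simp add: algebra_simps)

lemma py_mult_exp2:
  fixes h w :: "real \<times> real \<Rightarrow> real"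
  assumes "h differentiable (at p)" "w differentiable (at p)"
  shows "py (\<lambda>q. h q * exp (2 * w q)) p = exp (2 * w p) * (py h p + 2 * h p * py w p)"
  by (rule py_eq_derivative[THEN trans],
      (rule derivative_eq_intros has_derivative_partials assms refl)+) (simp add: algebra_simps)

lemma px_cong_open:
  assumes "open S" "p \<in> S" "\<And>q. q \<in> S \<Longrightarrow> F q = G q"
  shows "px F p = px G p"
proof -
  have "open ((\<lambda>t. (t, snd p)) -` S)"
    by (rule continuous_open_vimage[OF assms(1)]) (auto intro!: continuous_intros)
  then have "eventually (\<lambda>t. t \<in> (\<lambda>t. (t, snd p)) -` S) (nhds (fst p))"
    by (rule eventually_nhds_in_open) (simp add: assms(2))
  then show ?thesis
    unfolding px_def
    by (intro vector_derivative_cong_eq[where A = UNIV and B = UNIV])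
      (auto elim: eventually_mono simp: assms(3))
qed

lemma py_cong_open:
  assumes "open S" "p \<in> S" "\<And>q. q \<in> S \<Longrightarrow> F q = G q"
  shows "py F p = py G p"
proof -
  have "open ((\<lambda>t. (fst p, t)) -` S)"
    by (rule continuous_open_vimage[OF assms(1)]) (auto intro!: continuous_intros)
  then have "eventually (\<lambda>t. t \<in> (\<lambda>t. (fst p, t)) -` S) (nhds (snd p))"
    by (rule eventually_nhds_in_open) (simp add: assms(2))
  then show ?thesis
    unfolding py_def
    by (intro vector_derivative_cong_eq[where A = UNIV and B = UNIV])
      (auto elim: eventually_mono simp: assms(3))
qed

lemma px_const_on:
  assumes "open S" "p \<in> S" "\<And>q. q \<in> S \<Longrightarrow> F q = c"
  shows "px F p = 0"
  using px_cong_open[OF assms] px_eq_derivative[OF has_derivative_const] by simp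

lemma py_const_on:
  assumes "open S" "p \<in> S" "\<And>q. q \<in> S \<Longrightarrow> F q = c"
  shows "py F p = 0"
  using py_cong_open[OF assms] py_eq_derivative[OF has_derivative_const] by simp

section \<open>Smooth functions\<close>

text \<open>Closure of smooth_on under products and exp needs an induction on the order of
  differentiation, hence this finite-order version.\<close>

definition differentiable_upto_on ::
    "nat \<Rightarrow> (real \<times> real) set \<Rightarrow> (real \<times> real \<Rightarrow> 'a::real_normed_vector) \<Rightarrow> bool" where
  "differentiable_upto_on k S F \<longleftrightarrow> (\<forall>bs. length bs \<le> k \<longrightarrow> pd bs F differentiable_on S)"

lemma pd_append: "pd (bs @ [b]) F = pd bs ((if b then px else py) F)"
  by (induction bs) auto

lemma pd_cong_open:
  assumes "open S" "\<And>q. q \<in> S \<Longrightarrow> F q = G q" "q \<in> S"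
  shows "pd bs F q = pd bs G q"
  using assms(3)
proof (induction bs arbitrary: q)
  case (Cons b bs)
  then show ?case
    using px_cong_open[OF assms(1) Cons.prems Cons.IH] py_cong_open[OF assms(1) Cons.prems Cons.IH]
    by simp
qed (use assms(2) in simp)

lemma differentiable_upto_on_0: "differentiable_upto_on 0 S F \<longleftrightarrow> F differentiable_on S"
  by (simp add: differentiable_upto_on_def)

lemma differentiable_upto_on_Suc:
  "differentiable_upto_on (Suc k) S F \<longleftrightarrow>
     F differentiable_on S \<and> differentiable_upto_on k S (px F) \<and> differentiable_upto_on k S (py F)"
proof -
  have split_last: "(\<forall>bs. length bs \<le> Suc k \<longrightarrow> P bs) \<longleftrightarrow>
      P [] \<and> (\<forall>bs. length bs \<le> k \<longrightarrow> P (bs @ [True]) \<and> P (bs @ [False]))" for P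
  proof (intro iffI allI impI)
    fix bs :: "bool list"
    assume "P [] \<and> (\<forall>bs. length bs \<le> k \<longrightarrow> P (bs @ [True]) \<and> P (bs @ [False]))" "length bs \<le> Suc k"
    then show "P bs"
      by (cases bs rule: rev_cases) (auto, metis (full_types))
  qed auto
  show ?thesis
    by (simp only: differentiable_upto_on_def split_last) (auto simp: pd_append)
qed

lemma differentiable_upto_on_Suc_imp:
  "differentiable_upto_on (Suc k) S F \<Longrightarrow> differentiable_upto_on k S F"
  by (simp add: differentiable_upto_on_def)

lemma differentiable_upto_on_cong:
  assumes "open S" "\<And>q. q \<in> S \<Longrightarrow> F q = G q" "differentiable_upto_on k S F"
  shows "differentiable_upto_on k S G"
proof -
  have "pd bs G differentiable_on S" if "pd bs F differentiable_on S" for bs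
    using that pd_cong_open[OF assms(1,2)]
    by (auto simp: differentiable_on_def intro: differentiable_transform_within[OF _ zero_less_one])
  with assms(3) show ?thesis
    by (simp add: differentiable_upto_on_def)
qed

lemma differentiable_upto_on_imp_differentiable:
  assumes "open S" "differentiable_upto_on k S F" "q \<in> S"
  shows "F differentiable (at q)"
  using assms differentiable_upto_on_def[of k S F] differentiable_on_eq_differentiable_at[OF assms(1)]
  by (metis le0 list.size(3) pd.simps(1))

lemma differentiable_upto_on_add:
  assumes "open S" "differentiable_upto_on k S A" "differentiable_upto_on k S B"
  shows "differentiable_upto_on k S (\<lambda>q. A q + B q)"
  using assms(2,3)
proof (induction k arbitrary: A B)
  case 0
  then show ?case by (simp add: differentiable_upto_on_0)
next
  case (Suc k)
  have "px (\<lambda>q. A q + B q) q = px A q + px B q" "py (\<lambda>q. A q + B q) q = py A q + py B q"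
    if "q \<in> S" for q
    using px_add py_add differentiable_upto_on_imp_differentiable[OF assms(1) _ that] Suc.prems
    by blast+
  with Suc show ?case
    unfolding differentiable_upto_on_Suc
    by (metis (mono_tags, lifting) assms(1) differentiable_on_add differentiable_upto_on_cong)
qed

lemma differentiable_on_bilinear:
  assumes "bounded_bilinear m" "A differentiable_on S" "B differentiable_on S"
  shows "(\<lambda>q. m (A q) (B q)) differentiable_on S"
  using assms bounded_bilinear.FDERIV[OF assms(1)]
  unfolding differentiable_on_def differentiable_def by blast

lemma differentiable_upto_on_bilinear:
  assumes "bounded_bilinear m" "open S"
    and "differentiable_upto_on k S A" "differentiable_upto_on k S B"
  shows "differentiable_upto_on k S (\<lambda>q. m (A q) (B q))"
  using assms(3,4)
proof (induction k arbitrary: A B)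
  case 0
  then show ?case
    by (simp add: differentiable_upto_on_0 differentiable_on_bilinear[OF assms(1)])
next
  case (Suc k)
  note diff = differentiable_upto_on_imp_differentiable[OF assms(2)]
  note lower = differentiable_upto_on_Suc_imp
  have A: "differentiable_upto_on k S A" "differentiable_upto_on k S (px A)"
      "differentiable_upto_on k S (py A)"
    and B: "differentiable_upto_on k S B" "differentiable_upto_on k S (px B)"
      "differentiable_upto_on k S (py B)"
    using Suc.prems lower by (auto simp: differentiable_upto_on_Suc)
  have "differentiable_upto_on k S (\<lambda>q. m (px A q) (B q) + m (A q) (px B q))"
    "differentiable_upto_on k S (\<lambda>q. m (py A q) (B q) + m (A q) (py B q))"
    using A B by (auto intro!: differentiable_upto_on_add[OF assms(2)] Suc.IH)
  moreover have "px (\<lambda>q. m (A q) (B q)) q = m (px A q) (B q) + m (A q) (px B q)"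
    "py (\<lambda>q. m (A q) (B q)) q = m (py A q) (B q) + m (A q) (py B q)" if "q \<in> S" for q
    using px_bilinear[OF assms(1)] py_bilinear[OF assms(1)]
      diff[OF Suc.prems(1) that] diff[OF Suc.prems(2) that]
    by blast+
  moreover have "(\<lambda>q. m (A q) (B q)) differentiable_on S"
    using Suc.prems by (simp add: differentiable_upto_on_Suc differentiable_on_bilinear[OF assms(1)])
  ultimately show ?case
    unfolding differentiable_upto_on_Suc
    by (metis (no_types, lifting) assms(2) differentiable_upto_on_cong)
qed

lemma differentiable_on_linear:
  assumes "bounded_linear L" "A differentiable_on S"
  shows "(\<lambda>q. L (A q)) differentiable_on S"
  using assms bounded_linear.has_derivative[OF assms(1)]
  unfolding differentiable_on_def differentiable_def by blast

lemma differentiable_upto_on_linear: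
  assumes "bounded_linear L" "open S" "differentiable_upto_on k S A"
  shows "differentiable_upto_on k S (\<lambda>q. L (A q))"
  using assms(3)
proof (induction k arbitrary: A)
  case 0
  then show ?case
    by (simp add: differentiable_upto_on_0 differentiable_on_linear[OF assms(1)])
next
  case (Suc k)
  have eq: "L (px A q) = px (\<lambda>q. L (A q)) q" "L (py A q) = py (\<lambda>q. L (A q)) q" if "q \<in> S" for q
    using px_linear[OF assms(1)] py_linear[OF assms(1)]
      differentiable_upto_on_imp_differentiable[OF assms(2) Suc.prems that] by simp_all
  have "differentiable_upto_on k S (\<lambda>q. L (px A q))"
    "differentiable_upto_on k S (\<lambda>q. L (py A q))"
    using Suc by (simp_all add: differentiable_upto_on_Suc)
  then have "differentiable_upto_on k S (px (\<lambda>q. L (A q)))"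
    "differentiable_upto_on k S (py (\<lambda>q. L (A q)))"
    using differentiable_upto_on_cong[OF assms(2), of "\<lambda>q. L (px A q)" "px (\<lambda>q. L (A q))"]
      differentiable_upto_on_cong[OF assms(2), of "\<lambda>q. L (py A q)" "py (\<lambda>q. L (A q))"] eq
    by blast+
  moreover have "(\<lambda>q. L (A q)) differentiable_on S"
    using Suc.prems by (simp add: differentiable_upto_on_Suc differentiable_on_linear[OF assms(1)])
  ultimately show ?case
    by (simp add: differentiable_upto_on_Suc)
qed

lemma differentiable_upto_on_exp:
  fixes a :: "real \<times> real \<Rightarrow> 'a::{banach,real_normed_field}"
  assumes "open S" "differentiable_upto_on k S a"
  shows "differentiable_upto_on k S (\<lambda>q. exp (a q))"
  using assms(2)
proof (induction k arbitrary: a)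
  case 0
  then show ?case
    by (simp add: differentiable_upto_on_0 differentiable_on_eq_differentiable_at[OF assms(1)]
        differentiable_exp_compose)
next
  case (Suc k)
  note diff = differentiable_upto_on_imp_differentiable[OF assms(1) Suc.prems]
  have eq: "exp (a q) * px a q = px (\<lambda>q. exp (a q)) q" "exp (a q) * py a q = py (\<lambda>q. exp (a q)) q"
    if "q \<in> S" for q
    using px_exp[OF diff[OF that]] py_exp[OF diff[OF that]] by simp_all
  have "differentiable_upto_on k S (\<lambda>q. exp (a q))"
    using Suc differentiable_upto_on_Suc_imp by blast
  then have "differentiable_upto_on k S (\<lambda>q. exp (a q) * px a q)"
    "differentiable_upto_on k S (\<lambda>q. exp (a q) * py a q)"
    using Suc.prems
    by (auto simp: differentiable_upto_on_Suc
        intro!: differentiable_upto_on_bilinear[OF bounded_bilinear_mult assms(1)])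
  then have "differentiable_upto_on k S (px (\<lambda>q. exp (a q)))"
    "differentiable_upto_on k S (py (\<lambda>q. exp (a q)))"
    using differentiable_upto_on_cong[OF assms(1), of "\<lambda>q. exp (a q) * px a q" "px (\<lambda>q. exp (a q))"]
      differentiable_upto_on_cong[OF assms(1), of "\<lambda>q. exp (a q) * py a q" "py (\<lambda>q. exp (a q))"] eq
    by blast+
  moreover have "(\<lambda>q. exp (a q)) differentiable_on S"
    by (auto simp: differentiable_on_eq_differentiable_at[OF assms(1)]
        intro!: differentiable_exp_compose diff)
  ultimately show ?case
    by (simp add: differentiable_upto_on_Suc)
qed

lemma smooth_on_iff_differentiable_upto_on:
  "smooth_on S F \<longleftrightarrow> (\<forall>k. differentiable_upto_on k S F)"
  unfolding smooth_on_def differentiable_upto_on_def by blast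

lemma smooth_on_imp_differentiable:
  "open S \<Longrightarrow> smooth_on S F \<Longrightarrow> q \<in> S \<Longrightarrow> F differentiable (at q)"
  using differentiable_upto_on_imp_differentiable smooth_on_iff_differentiable_upto_on by blast

lemma smooth_on_cong:
  assumes "open S" "\<And>q. q \<in> S \<Longrightarrow> F q = G q" "smooth_on S F"
  shows "smooth_on S G"
  using assms(2,3) differentiable_upto_on_cong[OF assms(1), of F G]
  unfolding smooth_on_iff_differentiable_upto_on by blast

lemma smooth_on_px:
  assumes "smooth_on S F"
  shows "smooth_on S (px F)"
proof -
  have "pd bs (px F) = pd (bs @ [True]) F" for bs
    by (simp add: pd_append)
  with assms show ?thesis
    by (simp add: smooth_on_def)
qed

lemma smooth_on_py:
  assumes "smooth_on S F"
  shows "smooth_on S (py F)"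
proof -
  have "pd bs (py F) = pd (bs @ [False]) F" for bs
    by (simp add: pd_append)
  with assms show ?thesis
    by (simp add: smooth_on_def)
qed

lemma smooth_on_add:
  assumes "open S" "smooth_on S A" "smooth_on S B"
  shows "smooth_on S (\<lambda>q. A q + B q)"
  using assms(2,3) differentiable_upto_on_add[OF assms(1)]
  unfolding smooth_on_iff_differentiable_upto_on by blast

lemma smooth_on_bilinear:
  assumes "bounded_bilinear m" "open S" "smooth_on S A" "smooth_on S B"
  shows "smooth_on S (\<lambda>q. m (A q) (B q))"
  using assms(3,4) differentiable_upto_on_bilinear[OF assms(1,2)]
  unfolding smooth_on_iff_differentiable_upto_on by blast

lemma smooth_on_linear:
  assumes "bounded_linear L" "open S" "smooth_on S A"
  shows "smooth_on S (\<lambda>q. L (A q))"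
  using assms(3) differentiable_upto_on_linear[OF assms(1,2)]
  unfolding smooth_on_iff_differentiable_upto_on by blast

lemma smooth_on_exp:
  fixes a :: "real \<times> real \<Rightarrow> 'a::{banach,real_normed_field}"
  assumes "open S" "smooth_on S a"
  shows "smooth_on S (\<lambda>q. exp (a q))"
  using assms(2) differentiable_upto_on_exp[OF assms(1)]
  unfolding smooth_on_iff_differentiable_upto_on by blast

lemma smooth_on_vector3:
  fixes a b c :: "real \<times> real \<Rightarrow> 'a::euclidean_space"
  assumes "open S" "smooth_on S a" "smooth_on S b" "smooth_on S c"
  shows "smooth_on S (\<lambda>q. vector [a q, b q, c q] :: 'a^3)"
proof -
  have lin: "bounded_linear (\<lambda>x. vector [x, 0, 0] :: 'a^3)"
    "bounded_linear (\<lambda>x. vector [0, x, 0] :: 'a^3)" "bounded_linear (\<lambda>x. vector [0, 0, x] :: 'a^3)"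
    unfolding linear_conv_bounded_linear[symmetric]
    by (intro linearI; simp add: vec_eq_iff forall_3)+
  have "(vector [a q, b q, c q] :: 'a^3) = vector [a q, 0, 0] + vector [0, b q, 0] + vector [0, 0, c q]"
    for q
    by (simp add: vec_eq_iff forall_3)
  then show ?thesis
    using assms
    by (simp add: smooth_on_add smooth_on_linear[OF lin(1)] smooth_on_linear[OF lin(2)]
        smooth_on_linear[OF lin(3)])
qed

section \<open>Symmetry of mixed partial derivatives\<close>

lemma second_difference_px_py:
  fixes F :: "real \<times> real \<Rightarrow> real"
  assumes "h > 0"
    and diff: "\<And>s t. a \<le> s \<Longrightarrow> s \<le> a + h \<Longrightarrow> b \<le> t \<Longrightarrow> t \<le> b + h \<Longrightarrow>
      F differentiable (at (s, t)) \<and> px F differentiable (at (s, t))"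
  shows "\<exists>s t. a < s \<and> s < a + h \<and> b < t \<and> t < b + h \<and>
    F (a + h, b + h) - F (a + h, b) - F (a, b + h) + F (a, b) = h * (h * py (px F) (s, t))"
proof -
  have "\<exists>s. a < s \<and> s < a + h \<and> (\<lambda>s. F (s, b + h) - F (s, b)) (a + h) - (\<lambda>s. F (s, b + h) - F (s, b)) a
      = (a + h - a) * (px F (s, b + h) - px F (s, b))"
  proof (rule MVT2)
    fix s assume "a \<le> s" "s \<le> a + h"
    with assms have "F differentiable (at (s, b + h))" "F differentiable (at (s, b))"
      by auto
    then show "((\<lambda>s. F (s, b + h) - F (s, b)) has_real_derivative px F (s, b + h) - px F (s, b)) (at s)"
      unfolding has_real_derivative_iff_has_vector_derivative
      by (auto dest!: has_vector_derivative_px intro!: derivative_eq_intros)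
  qed (use assms in simp)
  then obtain s where s: "a < s" "s < a + h"
    and eq_s: "F (a + h, b + h) - F (a + h, b) - F (a, b + h) + F (a, b) = h * (px F (s, b + h) - px F (s, b))"
    by (auto simp: algebra_simps)
  have "\<exists>t. b < t \<and> t < b + h \<and> px F (s, b + h) - px F (s, b) = (b + h - b) * py (px F) (s, t)"
  proof (rule MVT2[where f = "\<lambda>t. px F (s, t)"])
    fix t assume "b \<le> t" "t \<le> b + h"
    with s assms have "px F differentiable (at (s, t))"
      by auto
    then show "((\<lambda>t. px F (s, t)) has_real_derivative py (px F) (s, t)) (at t)"
      unfolding has_real_derivative_iff_has_vector_derivative
      by (auto dest!: has_vector_derivative_py)
  qed (use assms in simp)
  with s eq_s show ?thesis
    by auto
qed

lemma second_difference_py_px: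
  fixes F :: "real \<times> real \<Rightarrow> real"
  assumes "h > 0"
    and diff: "\<And>s t. a \<le> s \<Longrightarrow> s \<le> a + h \<Longrightarrow> b \<le> t \<Longrightarrow> t \<le> b + h \<Longrightarrow>
      F differentiable (at (s, t)) \<and> py F differentiable (at (s, t))"
  shows "\<exists>s t. a < s \<and> s < a + h \<and> b < t \<and> t < b + h \<and>
    F (a + h, b + h) - F (a + h, b) - F (a, b + h) + F (a, b) = h * (h * px (py F) (s, t))"
proof -
  have "\<exists>t. b < t \<and> t < b + h \<and> (\<lambda>t. F (a + h, t) - F (a, t)) (b + h) - (\<lambda>t. F (a + h, t) - F (a, t)) b
      = (b + h - b) * (py F (a + h, t) - py F (a, t))"
  proof (rule MVT2)
    fix t assume "b \<le> t" "t \<le> b + h"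
    with assms have "F differentiable (at (a + h, t))" "F differentiable (at (a, t))"
      by auto
    then show "((\<lambda>t. F (a + h, t) - F (a, t)) has_real_derivative py F (a + h, t) - py F (a, t)) (at t)"
      unfolding has_real_derivative_iff_has_vector_derivative
      by (auto dest!: has_vector_derivative_py intro!: derivative_eq_intros)
  qed (use assms in simp)
  then obtain t where t: "b < t" "t < b + h"
    and eq_t: "F (a + h, b + h) - F (a + h, b) - F (a, b + h) + F (a, b) = h * (py F (a + h, t) - py F (a, t))"
    by (auto simp: algebra_simps)
  have "\<exists>s. a < s \<and> s < a + h \<and> py F (a + h, t) - py F (a, t) = (a + h - a) * px (py F) (s, t)"
  proof (rule MVT2[where f = "\<lambda>s. py F (s, t)"])
    fix s assume "a \<le> s" "s \<le> a + h"
    with t assms have "py F differentiable (at (s, t))"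
      by auto
    then show "((\<lambda>s. py F (s, t)) has_real_derivative px (py F) (s, t)) (at s)"
      unfolding has_real_derivative_iff_has_vector_derivative
      by (auto dest!: has_vector_derivative_px)
  qed (use assms in simp)
  with t eq_t show ?thesis
    by auto
qed

lemma dist_Pair_le_square:
  fixes a b s t h :: real
  assumes "a \<le> s" "s \<le> a + h" "b \<le> t" "t \<le> b + h"
  shows "dist (s, t) (a, b) \<le> 2 * h"
proof -
  have "dist (s, t) (a, b) \<le> dist s a + dist t b"
    unfolding dist_Pair_Pair by (rule sqrt_sum_squares_le_sum_abs[THEN order_trans]) simp
  with assms show ?thesis
    by (simp add: dist_real_def)
qed

text \<open>The iterated mean value theorem in both orders expresses the same second difference over
  the square through py (px F) and px (py F).\<close>

lemma mixed_partials_meet_in_square: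
  fixes F :: "real \<times> real \<Rightarrow> real"
  assumes "h > 0"
    and diff: "\<And>s t. a \<le> s \<Longrightarrow> s \<le> a + h \<Longrightarrow> b \<le> t \<Longrightarrow> t \<le> b + h \<Longrightarrow>
      F differentiable (at (s, t)) \<and> px F differentiable (at (s, t)) \<and> py F differentiable (at (s, t))"
  obtains s t s' t' where "a < s" "s < a + h" "b < t" "t < b + h"
    and "a < s'" "s' < a + h" "b < t'" "t' < b + h"
    and "py (px F) (s, t) = px (py F) (s', t')"
proof -
  obtain s t where "a < s" "s < a + h" "b < t" "t < b + h"
    and xy: "F (a + h, b + h) - F (a + h, b) - F (a, b + h) + F (a, b) = h * (h * py (px F) (s, t))"
    using second_difference_px_py[OF assms(1)] diff by blast
  moreover obtain s' t' where "a < s'" "s' < a + h" "b < t'" "t' < b + h"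
    and yx: "F (a + h, b + h) - F (a + h, b) - F (a, b + h) + F (a, b) = h * (h * px (py F) (s', t'))"
    using second_difference_py_px[OF assms(1)] diff by blast
  moreover have "py (px F) (s, t) = px (py F) (s', t')"
    using xy yx assms(1) by simp
  ultimately show ?thesis
    using that by blast
qed

lemma schwarz_real:
  fixes F :: "real \<times> real \<Rightarrow> real"
  assumes "open S" "p \<in> S"
    and diff: "\<And>q. q \<in> S \<Longrightarrow>
      F differentiable (at q) \<and> px F differentiable (at q) \<and> py F differentiable (at q)"
    and cont: "continuous_on S (py (px F))" "continuous_on S (px (py F))"
  shows "py (px F) p = px (py F) p"
proof (rule ccontr)
  define d where "d = \<bar>py (px F) p - px (py F) p\<bar> / 2"
  assume "py (px F) p \<noteq> px (py F) p"
  then have "d > 0"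
    by (simp add: d_def)
  define U where "U = (py (px F) -` ball (py (px F) p) d \<inter> S) \<inter> (px (py F) -` ball (px (py F) p) d \<inter> S)"
  have vimage_open: "open (G -` ball (G p) d \<inter> S)" if "continuous_on S G" for G :: "real \<times> real \<Rightarrow> real"
    using that continuous_on_open_vimage[OF assms(1)] open_ball by blast
  have "open U"
    unfolding U_def by (rule open_Int[OF vimage_open[OF cont(1)] vimage_open[OF cont(2)]])
  moreover have "p \<in> U"
    using assms(2) \<open>d > 0\<close> by (simp add: U_def)
  ultimately obtain e where e: "e > 0" "ball p e \<subseteq> U"
    using open_contains_ball by blast
  have near: "q \<in> S \<and> dist (py (px F) q) (py (px F) p) < d \<and> dist (px (py F) q) (px (py F) p) < d"
    if "dist q p < e" for q
    using that e(2) by (auto simp: U_def dist_commute)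
  obtain a b where p: "p = (a, b)"
    by (cases p)
  define h where "h = e / 4"
  have h: "h > 0"
    using e by (simp add: h_def)
  have square: "dist (s, t) p < e" if "a \<le> s" "s \<le> a + h" "b \<le> t" "t \<le> b + h" for s t
    using dist_Pair_le_square[OF that] e(1) by (simp add: p h_def)
  then have "(s, t) \<in> S" if "a \<le> s" "s \<le> a + h" "b \<le> t" "t \<le> b + h" for s t
    using that near by blast
  with diff have diff_square: "F differentiable (at (s, t)) \<and> px F differentiable (at (s, t))
      \<and> py F differentiable (at (s, t))" if "a \<le> s" "s \<le> a + h" "b \<le> t" "t \<le> b + h" for s t
    using that by blast
  obtain s t s' t' where st: "a < s" "s < a + h" "b < t" "t < b + h"
    and st': "a < s'" "s' < a + h" "b < t'" "t' < b + h"
    and "py (px F) (s, t) = px (py F) (s', t')"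
    using mixed_partials_meet_in_square[OF h] diff_square by blast
  moreover have "dist (py (px F) (s, t)) (py (px F) p) < d" "dist (px (py F) (s', t')) (px (py F) p) < d"
    using near square st st' by auto
  ultimately show False
    unfolding d_def dist_real_def by (simp add: abs_less_iff abs_if split: if_splits)
qed

lemma smooth_on_schwarz:
  fixes F :: "real \<times> real \<Rightarrow> 'a::euclidean_space"
  assumes "open S" "smooth_on S F" "p \<in> S"
  shows "py (px F) p = px (py F) p"
proof (rule euclidean_eqI)
  fix b :: 'a
  define G where "G = (\<lambda>q. F q \<bullet> b)"
  have L: "bounded_linear (\<lambda>x::'a. x \<bullet> b)"
    by (rule bounded_linear_inner_left)
  have G: "smooth_on S G"
    unfolding G_def by (rule smooth_on_linear[OF L assms(1,2)])
  note diff = smooth_on_imp_differentiable[OF assms(1)]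
  have "py (px G) p = py (\<lambda>q. px F q \<bullet> b) p"
    using px_linear[OF L diff[OF assms(2)]] by (intro py_cong_open[OF assms(1,3)]) (simp add: G_def)
  also have "\<dots> = py (px F) p \<bullet> b"
    using py_linear[OF L diff[OF smooth_on_px[OF assms(2)] assms(3)]] .
  finally have xy: "py (px G) p = py (px F) p \<bullet> b" .
  have "px (py G) p = px (\<lambda>q. py F q \<bullet> b) p"
    using py_linear[OF L diff[OF assms(2)]] by (intro px_cong_open[OF assms(1,3)]) (simp add: G_def)
  also have "\<dots> = px (py F) p \<bullet> b"
    using px_linear[OF L diff[OF smooth_on_py[OF assms(2)] assms(3)]] .
  finally have yx: "px (py G) p = px (py F) p \<bullet> b" .
  have "py (px G) p = px (py G) p"
  proof (rule schwarz_real[OF assms(1,3)])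
    show "G differentiable (at q) \<and> px G differentiable (at q) \<and> py G differentiable (at q)"
      if "q \<in> S" for q
      using diff[OF G that] diff[OF smooth_on_px[OF G] that] diff[OF smooth_on_py[OF G] that] by blast
    show "continuous_on S (py (px G))" "continuous_on S (px (py G))"
    proof -
      have "pd [False, True] G differentiable_on S" "pd [True, False] G differentiable_on S"
        using G unfolding smooth_on_def by blast+
      then show "continuous_on S (py (px G))" "continuous_on S (px (py G))"
        by (simp_all add: differentiable_imp_continuous_on)
    qed
  qed
  with xy yx show "py (px F) p \<bullet> b = px (py F) p \<bullet> b"
    by simp
qed

section \<open>The Hermitian product and unitary matrices\<close>

lemma bounded_bilinear_herm: "bounded_bilinear herm"
proof -
  have "linear (\<lambda>u. herm u w)" "linear (\<lambda>w. herm u w)" for u w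
    by (rule linearI;
        simp only: herm_def vector_add_component vector_scaleR_component;
        simp add: sum.distrib sum_distrib_left algebra_simps scaleR_conv_of_real)+
  then have "bilinear herm"
    by (simp add: bilinear_def)
  then show ?thesis
    by (simp add: bilinear_conv_bounded_bilinear)
qed

lemma herm_smult_left: "herm (c *s u) w = c * herm u w"
  by (simp add: herm_def sum_distrib_left mult.assoc)

lemmas herm_left_simps = bounded_bilinear.add_left[OF bounded_bilinear_herm]
  bounded_bilinear.diff_left[OF bounded_bilinear_herm] bounded_bilinear.scaleR_left[OF bounded_bilinear_herm]
  herm_smult_left

lemma bounded_linear_mult_of_real: "bounded_linear (\<lambda>x::real. c * complex_of_real x)"
  by (rule bounded_linear_compose[OF bounded_linear_mult_right bounded_linear_of_real])

lemma scaleR_eq_vector_smult: "t *\<^sub>R (w::complex^'n) = complex_of_real t *s w"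
  unfolding vec_eq_iff vector_scaleR_component vector_smult_component by (simp add: scaleR_conv_of_real)

lemma bounded_bilinear_vector_smult: "bounded_bilinear (\<lambda>(c::complex) (w::complex^'n). c *s w)"
proof -
  have "bilinear (\<lambda>(c::complex) (w::complex^'n). c *s w)"
    unfolding bilinear_def
    by (intro conjI allI linearI;
        simp only: vec_eq_iff vector_smult_component vector_add_component vector_scaleR_component;
        simp add: algebra_simps scaleR_conv_of_real)
  then show ?thesis
    by (simp add: bilinear_conv_bounded_bilinear)
qed

lemma bounded_linear_matrix_entry: "bounded_linear (\<lambda>A::'a::real_normed_vector^'n^'m. A $ i $ j)"
  by (rule bounded_linear_compose[OF bounded_linear_vec_nth bounded_linear_vec_nth])

lemma cnj_transpose_nth: "(A ** cnj_transpose B) $ i $ j = herm (A $ i) (B $ j)"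
  by (simp add: matrix_matrix_mult_def cnj_transpose_def herm_def)

lemma cnj_transpose_cnj_transpose [simp]: "cnj_transpose (cnj_transpose A) = A"
  by (simp add: cnj_transpose_def vec_eq_iff)

lemma cnj_transpose_matrix_mult: "cnj_transpose (A ** B) = cnj_transpose B ** cnj_transpose A"
  by (simp add: cnj_transpose_def matrix_matrix_mult_def vec_eq_iff mult.commute)

lemma unitary_cnj_transpose_mult:
  "A ** cnj_transpose A = mat 1 \<Longrightarrow> cnj_transpose A ** A = mat 1"
  using matrix_left_right_inverse by blast

lemma unitary_mult_cnj_transpose:
  assumes "U ** cnj_transpose U = mat 1"
  shows "(A ** U) ** cnj_transpose (B ** U) = A ** cnj_transpose B"
proof -
  have "(A ** U) ** cnj_transpose (B ** U) = A ** ((U ** cnj_transpose U) ** cnj_transpose B)"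
    by (simp add: cnj_transpose_matrix_mult matrix_mul_assoc)
  then show ?thesis
    by (simp add: assms)
qed

lemma bounded_bilinear_mult_cnj_transpose:
  "bounded_bilinear (\<lambda>A B :: complex^3^3. A ** cnj_transpose B)"
proof -
  have "bilinear (\<lambda>A B :: complex^3^3. A ** cnj_transpose B)"
    unfolding bilinear_def
    by (intro conjI allI linearI;
        simp only: vec_eq_iff matrix_matrix_mult_def cnj_transpose_def vec_lambda_beta
          vector_add_component vector_scaleR_component;
        simp add: sum.distrib sum_distrib_left algebra_simps scaleR_conv_of_real)
  then show ?thesis
    by (simp add: bilinear_conv_bounded_bilinear)
qed

text \<open>Together with has_derivative_det3 this is Jacobi's formula for the derivative of det A
  along W ** A.\<close>

lemma det_row_replace_sum:
  fixes A W :: "'a::comm_ring_1^3^3"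
  shows "(\<Sum>i\<in>UNIV. det (\<chi> k. if k = i then (W ** A) $ k else A $ k)) = trace W * det A"
  by (simp add: det_3 sum_3 matrix_matrix_mult_def trace_def algebra_simps)

lemma has_derivative_det3:
  fixes E :: "real \<times> real \<Rightarrow> 'a::real_normed_field^3^3"
  assumes "(E has_derivative E') (at p)"
  shows "((\<lambda>q. det (E q)) has_derivative
    (\<lambda>h. \<Sum>i\<in>UNIV. det (\<chi> k. if k = i then E' h $ k else E p $ k))) (at p)"
proof -
  have entry: "((\<lambda>q. E q $ i $ j) has_derivative (\<lambda>h. E' h $ i $ j)) (at p)" for i j
    using bounded_linear.has_derivative[OF bounded_linear_compose[OF bounded_linear_vec_nth
          bounded_linear_vec_nth] assms] .
  show ?thesis
    unfolding det_3
    by (rule has_derivative_eq_rhs, (rule derivative_eq_intros entry refl)+)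
      (simp add: fun_eq_iff sum_3 algebra_simps)
qed

lemma px_det3:
  fixes E :: "real \<times> real \<Rightarrow> 'a::real_normed_field^3^3"
  assumes "E differentiable (at p)"
  shows "px (\<lambda>q. det (E q)) p = (\<Sum>i\<in>UNIV. det (\<chi> k. if k = i then px E p $ k else E p $ k))"
  using px_eq_derivative[OF has_derivative_det3[OF has_derivative_partials[OF assms]]]
  by (simp cong: if_cong)

lemma py_det3:
  fixes E :: "real \<times> real \<Rightarrow> 'a::real_normed_field^3^3"
  assumes "E differentiable (at p)"
  shows "py (\<lambda>q. det (E q)) p = (\<Sum>i\<in>UNIV. det (\<chi> k. if k = i then py E p $ k else E p $ k))"
  using py_eq_derivative[OF has_derivative_det3[OF has_derivative_partials[OF assms]]]
  by (simp cong: if_cong)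

section \<open>Connection matrices of a unitary frame\<close>

definition connection ::
    "((real \<times> real \<Rightarrow> complex^3^3) \<Rightarrow> real \<times> real \<Rightarrow> complex^3^3) \<Rightarrow>
      (real \<times> real \<Rightarrow> complex^3^3) \<Rightarrow> real \<times> real \<Rightarrow> complex^3^3" where
  "connection D E q = D E q ** cnj_transpose (E q)"

lemma connection_entry: "connection D E q $ i $ j = herm (D E q $ i) (E q $ j)"
  by (simp add: connection_def cnj_transpose_nth)

lemma connection_antihermitian_entry:
  assumes "cnj_transpose W = - W"
  shows "W $ i $ j = - cnj (W $ j $ i)"
proof -
  have "cnj (W $ j $ i) = cnj_transpose W $ i $ j"
    by (simp add: cnj_transpose_def)
  also have "\<dots> = - W $ i $ j"
    by (simp add: assms)
  finally show ?thesis
    by (metis minus_minus)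
qed

lemma connection_mult_frame:
  assumes "E p ** cnj_transpose (E p) = mat 1"
  shows "D E p = connection D E p ** E p"
  using unitary_cnj_transpose_mult[OF assms]
  by (simp add: connection_def flip: matrix_mul_assoc)

lemma connection_antihermitian_px:
  assumes "open S" "p \<in> S" "E differentiable (at p)" "\<forall>q\<in>S. E q ** cnj_transpose (E q) = mat 1"
  shows "cnj_transpose (connection px E p) = - connection px E p"
proof -
  have "0 = px (\<lambda>q. E q ** cnj_transpose (E q)) p"
    using px_const_on[OF assms(1,2), of "\<lambda>q. E q ** cnj_transpose (E q)" "mat 1"] assms(4) by simp
  also have "\<dots> = connection px E p + cnj_transpose (connection px E p)"
    using px_bilinear[OF bounded_bilinear_mult_cnj_transpose assms(3,3)]
    by (simp add: connection_def cnj_transpose_matrix_mult)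
  finally show ?thesis
    by (simp add: eq_neg_iff_add_eq_0 add.commute)
qed

lemma connection_antihermitian_py:
  assumes "open S" "p \<in> S" "E differentiable (at p)" "\<forall>q\<in>S. E q ** cnj_transpose (E q) = mat 1"
  shows "cnj_transpose (connection py E p) = - connection py E p"
proof -
  have "0 = py (\<lambda>q. E q ** cnj_transpose (E q)) p"
    using py_const_on[OF assms(1,2), of "\<lambda>q. E q ** cnj_transpose (E q)" "mat 1"] assms(4) by simp
  also have "\<dots> = connection py E p + cnj_transpose (connection py E p)"
    using py_bilinear[OF bounded_bilinear_mult_cnj_transpose assms(3,3)]
    by (simp add: connection_def cnj_transpose_matrix_mult)
  finally show ?thesis
    by (simp add: eq_neg_iff_add_eq_0 add.commute)
qed

lemma trace_connection_px_SU3: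
  assumes "open S" "p \<in> S" "E differentiable (at p)" "\<forall>q\<in>S. SU3 (E q)"
  shows "trace (connection px E p) = 0"
proof -
  have "0 = px (\<lambda>q. det (E q)) p"
    using px_const_on[OF assms(1,2), of "\<lambda>q. det (E q)" 1] assms(4) by (simp add: SU3_def)
  also have "\<dots> = (\<Sum>i\<in>UNIV. det (\<chi> k. if k = i then (connection px E p ** E p) $ k else E p $ k))"
    using px_det3[OF assms(3)] connection_mult_frame[of E p px] assms(2,4)
    by (simp add: SU3_def cong: if_cong)
  also have "\<dots> = trace (connection px E p)"
    using assms(2,4) by (subst det_row_replace_sum) (simp add: SU3_def)
  finally show ?thesis ..
qed

lemma trace_connection_py_SU3:
  assumes "open S" "p \<in> S" "E differentiable (at p)" "\<forall>q\<in>S. SU3 (E q)"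
  shows "trace (connection py E p) = 0"
proof -
  have "0 = py (\<lambda>q. det (E q)) p"
    using py_const_on[OF assms(1,2), of "\<lambda>q. det (E q)" 1] assms(4) by (simp add: SU3_def)
  also have "\<dots> = (\<Sum>i\<in>UNIV. det (\<chi> k. if k = i then (connection py E p ** E p) $ k else E p $ k))"
    using py_det3[OF assms(3)] connection_mult_frame[of E p py] assms(2,4)
    by (simp add: SU3_def cong: if_cong)
  also have "\<dots> = trace (connection py E p)"
    using assms(2,4) by (subst det_row_replace_sum) (simp add: SU3_def)
  finally show ?thesis ..
qed

lemma connection_structure_equation:
  assumes "open S" "p \<in> S" "smooth_on S E" "\<forall>q\<in>S. E q ** cnj_transpose (E q) = mat 1"
  shows "py (connection px E) p - px (connection py E) p =
    connection px E p ** cnj_transpose (connection py E p) -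
    connection py E p ** cnj_transpose (connection px E p)"
proof -
  note bb = bounded_bilinear_mult_cnj_transpose
  note diff = smooth_on_imp_differentiable[OF assms(1) _ assms(2)]
  have "py (connection px E) p = py (px E) p ** cnj_transpose (E p) + px E p ** cnj_transpose (py E p)"
    using py_bilinear[OF bb diff[OF smooth_on_px[OF assms(3)]] diff[OF assms(3)]]
    by (simp add: connection_def[abs_def])
  moreover have "px (connection py E) p = px (py E) p ** cnj_transpose (E p) + py E p ** cnj_transpose (px E p)"
    using px_bilinear[OF bb diff[OF smooth_on_py[OF assms(3)]] diff[OF assms(3)]]
    by (simp add: connection_def[abs_def])
  moreover have "py (px E) p = px (py E) p"
    by (rule smooth_on_schwarz[OF assms(1,3,2)])
  moreover have "D E p ** cnj_transpose (D' E p) = connection D E p ** cnj_transpose (connection D' E p)"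
    for D D'
    using assms(2,4) connection_mult_frame[of E p D] connection_mult_frame[of E p D']
      unitary_mult_cnj_transpose[of "E p" "connection D E p" "connection D' E p"] by simp
  ultimately show ?thesis
    by simp
qed

section \<open>The moving frame of a conformal Lagrangian immersion\<close>

locale lagrangian_frame =
  fixes \<Omega> :: "(real \<times> real) set"
    and r :: "real \<times> real \<Rightarrow> complex^3"
    and v \<beta> f g :: "real \<times> real \<Rightarrow> real"
  assumes open_domain: "open \<Omega>"
    and r_smooth: "smooth_on \<Omega> r"
    and v_smooth: "smooth_on \<Omega> v"
    and \<beta>_smooth: "smooth_on \<Omega> \<beta>"
    and SU: "\<forall>p\<in>\<Omega>. SU3 (vector [exp (\<i> * complex_of_real (\<beta> p)) *s r p,
                                   exp (- v p) *\<^sub>R px r p,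
                                   exp (- v p) *\<^sub>R py r p])"
    and f_eq: "\<forall>p\<in>\<Omega>. \<i> * complex_of_real (f p)
                  = herm (px (\<lambda>q. exp (- v q) *\<^sub>R py r q) p) (exp (- v p) *\<^sub>R py r p)"
    and g_eq: "\<forall>p\<in>\<Omega>. \<i> * complex_of_real (g p)
                  = herm (py (\<lambda>q. exp (- v q) *\<^sub>R px r q) p) (exp (- v p) *\<^sub>R px r p)"
begin

definition e0 :: "real \<times> real \<Rightarrow> complex^3" where
  "e0 = (\<lambda>q. exp (\<i> * complex_of_real (\<beta> q)) *s r q)"

definition e1 :: "real \<times> real \<Rightarrow> complex^3" where
  "e1 = (\<lambda>q. exp (- v q) *\<^sub>R px r q)"

definition e2 :: "real \<times> real \<Rightarrow> complex^3" where
  "e2 = (\<lambda>q. exp (- v q) *\<^sub>R py r q)"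

definition frame :: "real \<times> real \<Rightarrow> complex^3^3" where
  "frame = (\<lambda>q. vector [e0 q, e1 q, e2 q])"

definition phase :: "real \<times> real \<Rightarrow> complex" where
  "phase q = exp (\<i> * \<beta> q) * exp (v q)"

lemma phase_norm_squared: "(Re (phase q))\<^sup>2 + (Im (phase q))\<^sup>2 = (exp (v q))\<^sup>2"
  using cmod_power2[of "phase q"] by (simp add: phase_def norm_mult norm_exp_i_times)

lemma frame_nth [simp]: "frame q $ 1 = e0 q" "frame q $ 2 = e1 q" "frame q $ 3 = e2 q"
  by (simp_all add: frame_def)

lemma smooth_frame: "smooth_on \<Omega> e0" "smooth_on \<Omega> e1" "smooth_on \<Omega> e2" "smooth_on \<Omega> frame"
proof -
  note smult = smooth_on_bilinear[OF bounded_bilinear_vector_smult open_domain]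
  note scale = smooth_on_bilinear[OF bounded_bilinear_scaleR open_domain]
  from smooth_on_linear[OF bounded_linear_mult_of_real open_domain \<beta>_smooth]
  show e0: "smooth_on \<Omega> e0"
    unfolding e0_def by (rule smult[OF smooth_on_exp[OF open_domain] r_smooth])
  have "smooth_on \<Omega> (\<lambda>q. exp (- v q))"
    by (rule smooth_on_exp[OF open_domain smooth_on_linear[OF bounded_linear_minus[OF bounded_linear_ident]
          open_domain v_smooth]])
  then show e1: "smooth_on \<Omega> e1" and e2: "smooth_on \<Omega> e2"
    unfolding e1_def e2_def
    by (rule scale[OF _ smooth_on_px[OF r_smooth]], rule scale[OF _ smooth_on_py[OF r_smooth]])
  show "smooth_on \<Omega> frame"
    unfolding frame_def by (rule smooth_on_vector3[OF open_domain e0 e1 e2])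
qed

lemma frame_SU3: "q \<in> \<Omega> \<Longrightarrow> SU3 (frame q)"
  using SU by (simp add: frame_def e0_def e1_def e2_def)

lemma frame_unitary: "q \<in> \<Omega> \<Longrightarrow> frame q ** cnj_transpose (frame q) = mat 1"
  using frame_SU3 by (simp add: SU3_def)

lemma herm_frame:
  assumes "q \<in> \<Omega>"
  shows "herm (frame q $ i) (frame q $ j) = (if i = j then 1 else 0)"
  using frame_unitary[OF assms] cnj_transpose_nth[of "frame q" "frame q" i j]
  by (simp add: mat_def)

lemma frame_orthonormal:
  assumes "q \<in> \<Omega>"
  shows "herm (e0 q) (e0 q) = 1" "herm (e1 q) (e1 q) = 1" "herm (e2 q) (e2 q) = 1"
    "herm (e0 q) (e1 q) = 0" "herm (e0 q) (e2 q) = 0" "herm (e1 q) (e2 q) = 0"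
    "herm (e1 q) (e0 q) = 0" "herm (e2 q) (e0 q) = 0" "herm (e2 q) (e1 q) = 0"
  using herm_frame[OF assms, of 1 1] herm_frame[OF assms, of 2 2] herm_frame[OF assms, of 3 3]
    herm_frame[OF assms, of 1 2] herm_frame[OF assms, of 1 3] herm_frame[OF assms, of 2 3]
    herm_frame[OF assms, of 2 1] herm_frame[OF assms, of 3 1] herm_frame[OF assms, of 3 2]
  by simp_all

lemma px_r_eq: "px r = (\<lambda>q. exp (v q) *\<^sub>R e1 q)"
  and py_r_eq: "py r = (\<lambda>q. exp (v q) *\<^sub>R e2 q)"
  by (simp_all add: e1_def e2_def fun_eq_iff exp_minus)

lemma px_e0:
  assumes "q \<in> \<Omega>"
  shows "px e0 q = (\<i> * px \<beta> q) *s e0 q + phase q *s e1 q"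
proof -
  note diff = smooth_on_imp_differentiable[OF open_domain _ assms]
  have i\<beta>: "(\<lambda>q. \<i> * complex_of_real (\<beta> q)) differentiable (at q)"
    by (rule diff[OF smooth_on_linear[OF bounded_linear_mult_of_real open_domain \<beta>_smooth]])
  have "px (\<lambda>q. exp (\<i> * complex_of_real (\<beta> q))) q = exp (\<i> * \<beta> q) * (\<i> * px \<beta> q)"
    using px_exp[OF i\<beta>] px_linear[OF bounded_linear_mult_of_real diff[OF \<beta>_smooth]] by simp
  moreover note px_bilinear[OF bounded_bilinear_vector_smult differentiable_exp_compose[OF i\<beta>]
      diff[OF r_smooth]]
  ultimately show ?thesis
    by (simp add: e0_def[abs_def] phase_def px_r_eq scaleR_eq_vector_smult algebra_simps)
qed

lemma py_e0:
  assumes "q \<in> \<Omega>"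
  shows "py e0 q = (\<i> * py \<beta> q) *s e0 q + phase q *s e2 q"
proof -
  note diff = smooth_on_imp_differentiable[OF open_domain _ assms]
  have i\<beta>: "(\<lambda>q. \<i> * complex_of_real (\<beta> q)) differentiable (at q)"
    by (rule diff[OF smooth_on_linear[OF bounded_linear_mult_of_real open_domain \<beta>_smooth]])
  have "py (\<lambda>q. exp (\<i> * complex_of_real (\<beta> q))) q = exp (\<i> * \<beta> q) * (\<i> * py \<beta> q)"
    using py_exp[OF i\<beta>] py_linear[OF bounded_linear_mult_of_real diff[OF \<beta>_smooth]] by simp
  moreover note py_bilinear[OF bounded_bilinear_vector_smult differentiable_exp_compose[OF i\<beta>]
      diff[OF r_smooth]]
  ultimately show ?thesis
    by (simp add: e0_def[abs_def] phase_def py_r_eq scaleR_eq_vector_smult algebra_simps)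
qed

text \<open>The symmetry r_xy = r_yx written in the frame.\<close>

lemma torsion:
  assumes "q \<in> \<Omega>"
  shows "px e2 q = py e1 q + py v q *\<^sub>R e1 q - px v q *\<^sub>R e2 q"
proof -
  note diff = smooth_on_imp_differentiable[OF open_domain _ assms]
  have ev: "(\<lambda>q. exp (v q)) differentiable (at q)"
    by (rule differentiable_exp_compose[OF diff[OF v_smooth]])
  have "py (px r) q = exp (v q) *\<^sub>R (py v q *\<^sub>R e1 q + py e1 q)"
    using py_bilinear[OF bounded_bilinear_scaleR ev diff[OF smooth_frame(2)]] py_exp[OF diff[OF v_smooth]]
    by (simp add: px_r_eq scaleR_add_right)
  moreover have "px (py r) q = exp (v q) *\<^sub>R (px v q *\<^sub>R e2 q + px e2 q)"
    using px_bilinear[OF bounded_bilinear_scaleR ev diff[OF smooth_frame(3)]] px_exp[OF diff[OF v_smooth]]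
    by (simp add: py_r_eq scaleR_add_right)
  moreover have "py (px r) q = px (py r) q"
    by (rule smooth_on_schwarz[OF open_domain r_smooth assms])
  ultimately have "py v q *\<^sub>R e1 q + py e1 q = px v q *\<^sub>R e2 q + px e2 q"
    by simp
  then show ?thesis
    by (simp add: algebra_simps)
qed

text \<open>The connection matrices of the frame (lemmas connection_px_frame and
  connection_py_frame); rows and columns 1, 2, 3 correspond to e0, e1, e2.\<close>

definition omega_x :: "real \<times> real \<Rightarrow> complex^3^3" where
  "omega_x q = vector [
     vector [\<i> * px \<beta> q, phase q, 0],
     vector [- cnj (phase q), - \<i> * (px \<beta> q + f q), - py v q + \<i> * g q],
     vector [0, py v q + \<i> * g q, \<i> * f q]]"

definition omega_y :: "real \<times> real \<Rightarrow> complex^3^3" where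
  "omega_y q = vector [
     vector [\<i> * py \<beta> q, 0, phase q],
     vector [0, \<i> * g q, px v q + \<i> * f q],
     vector [- cnj (phase q), - px v q + \<i> * f q, - \<i> * (py \<beta> q + g q)]]"

lemma herm_px_e2_e2: "q \<in> \<Omega> \<Longrightarrow> herm (px e2 q) (e2 q) = \<i> * f q"
  using f_eq by (simp add: e2_def)

lemma herm_py_e1_e1: "q \<in> \<Omega> \<Longrightarrow> herm (py e1 q) (e1 q) = \<i> * g q"
  using g_eq by (simp add: e1_def)

lemma connection_px_frame:
  assumes "q \<in> \<Omega>"
  shows "connection px frame q = omega_x q"
proof -
  let ?W = "connection px frame q"
  have diff: "frame differentiable (at q)"
    by (rule smooth_on_imp_differentiable[OF open_domain smooth_frame(4) assms])
  have rows: "px frame q $ 1 = px e0 q" "px frame q $ 2 = px e1 q" "px frame q $ 3 = px e2 q"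
    by (simp_all add: px_nth[OF diff])
  note on = frame_orthonormal[OF assms]
  have row1: "?W $ 1 $ 1 = \<i> * px \<beta> q" "?W $ 1 $ 2 = phase q" "?W $ 1 $ 3 = 0"
    by (simp_all add: connection_entry rows px_e0[OF assms] herm_left_simps on)
  have W33: "?W $ 3 $ 3 = \<i> * f q"
    by (simp add: connection_entry rows herm_px_e2_e2[OF assms])
  have W32: "?W $ 3 $ 2 = py v q + \<i> * g q"
    by (simp add: connection_entry rows torsion[OF assms] herm_left_simps on herm_py_e1_e1[OF assms])
      (simp add: scaleR_conv_of_real)
  have anti: "cnj_transpose ?W = - ?W"
    by (rule connection_antihermitian_px[OF open_domain assms diff]) (simp add: frame_unitary)
  have "trace ?W = 0"
    by (rule trace_connection_px_SU3[OF open_domain assms diff]) (simp add: frame_SU3)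
  then have W22: "?W $ 2 $ 2 = - ?W $ 1 $ 1 - ?W $ 3 $ 3"
    by (simp add: trace_def sum_3 eq_neg_iff_add_eq_0 algebra_simps)
  show ?thesis
    unfolding vec_eq_iff forall_3
    using connection_antihermitian_entry[OF anti, of 2 1] connection_antihermitian_entry[OF anti, of 2 3]
      connection_antihermitian_entry[OF anti, of 3 1]
    by (simp add: omega_x_def row1 W22 W32 W33 algebra_simps)
qed

lemma connection_py_frame:
  assumes "q \<in> \<Omega>"
  shows "connection py frame q = omega_y q"
proof -
  let ?W = "connection py frame q"
  have diff: "frame differentiable (at q)"
    by (rule smooth_on_imp_differentiable[OF open_domain smooth_frame(4) assms])
  have rows: "py frame q $ 1 = py e0 q" "py frame q $ 2 = py e1 q" "py frame q $ 3 = py e2 q"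
    by (simp_all add: py_nth[OF diff])
  note on = frame_orthonormal[OF assms]
  have row1: "?W $ 1 $ 1 = \<i> * py \<beta> q" "?W $ 1 $ 2 = 0" "?W $ 1 $ 3 = phase q"
    by (simp_all add: connection_entry rows py_e0[OF assms] herm_left_simps on)
  have W22: "?W $ 2 $ 2 = \<i> * g q"
    by (simp add: connection_entry rows herm_py_e1_e1[OF assms])
  have "py e1 q = px e2 q - py v q *\<^sub>R e1 q + px v q *\<^sub>R e2 q"
    using torsion[OF assms] by (simp add: algebra_simps)
  then have W23: "?W $ 2 $ 3 = px v q + \<i> * f q"
    by (simp add: connection_entry rows herm_left_simps on herm_px_e2_e2[OF assms])
      (simp add: scaleR_conv_of_real)
  have anti: "cnj_transpose ?W = - ?W"
    by (rule connection_antihermitian_py[OF open_domain assms diff]) (simp add: frame_unitary)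
  have "trace ?W = 0"
    by (rule trace_connection_py_SU3[OF open_domain assms diff]) (simp add: frame_SU3)
  then have W33: "?W $ 3 $ 3 = - ?W $ 1 $ 1 - ?W $ 2 $ 2"
    by (simp add: trace_def sum_3 eq_neg_iff_add_eq_0 algebra_simps)
  show ?thesis
    unfolding vec_eq_iff forall_3
    using connection_antihermitian_entry[OF anti, of 2 1] connection_antihermitian_entry[OF anti, of 3 1]
      connection_antihermitian_entry[OF anti, of 3 2]
    by (simp add: omega_y_def row1 W22 W23 W33 algebra_simps)
qed

lemma smooth_omega: "smooth_on \<Omega> omega_x" "smooth_on \<Omega> omega_y"
proof -
  note conn = smooth_on_bilinear[OF bounded_bilinear_mult_cnj_transpose open_domain _ smooth_frame(4)]
  have "smooth_on \<Omega> (connection px frame)" "smooth_on \<Omega> (connection py frame)"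
    using conn[OF smooth_on_px[OF smooth_frame(4)]] conn[OF smooth_on_py[OF smooth_frame(4)]]
    by (simp_all add: connection_def[abs_def])
  then show "smooth_on \<Omega> omega_x" "smooth_on \<Omega> omega_y"
    using smooth_on_cong[OF open_domain, of "connection px frame" omega_x]
      smooth_on_cong[OF open_domain, of "connection py frame" omega_y]
      connection_px_frame connection_py_frame by blast+
qed

lemma omega_structure_equation:
  assumes "p \<in> \<Omega>"
  shows "py omega_x p - px omega_y p =
    omega_x p ** cnj_transpose (omega_y p) - omega_y p ** cnj_transpose (omega_x p)"
proof -
  have "py (connection px frame) p = py omega_x p" "px (connection py frame) p = px omega_y p"
    using py_cong_open[OF open_domain assms, of "connection px frame" omega_x]
      px_cong_open[OF open_domain assms, of "connection py frame" omega_y]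
      connection_px_frame connection_py_frame by blast+
  with connection_structure_equation[OF open_domain assms smooth_frame(4)] show ?thesis
    using frame_unitary connection_px_frame[OF assms] connection_py_frame[OF assms] by simp
qed

lemma smooth_f_g: "smooth_on \<Omega> f" "smooth_on \<Omega> g"
proof -
  note herm_smooth = smooth_on_linear[OF bounded_linear_Im open_domain
      smooth_on_bilinear[OF bounded_bilinear_herm open_domain]]
  have "Im (herm (px e2 q) (e2 q)) = f q" "Im (herm (py e1 q) (e1 q)) = g q" if "q \<in> \<Omega>" for q
    using herm_px_e2_e2[OF that] herm_py_e1_e1[OF that] by simp_all
  then show "smooth_on \<Omega> f" "smooth_on \<Omega> g"
    using smooth_on_cong[OF open_domain _ herm_smooth[OF smooth_on_px[OF smooth_frame(3)] smooth_frame(3)]]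
      smooth_on_cong[OF open_domain _ herm_smooth[OF smooth_on_py[OF smooth_frame(2)] smooth_frame(2)]]
    by blast+
qed

lemma structure_equation_entries:
  assumes "p \<in> \<Omega>"
  shows "- \<i> * (py (px \<beta>) p + py f p) - \<i> * px g p
      = (omega_x p ** cnj_transpose (omega_y p) - omega_y p ** cnj_transpose (omega_x p)) $ 2 $ 2"
    and "- py (py v) p + \<i> * py g p - (px (px v) p + \<i> * px f p)
      = (omega_x p ** cnj_transpose (omega_y p) - omega_y p ** cnj_transpose (omega_x p)) $ 2 $ 3"
proof -
  note diff = smooth_on_imp_differentiable[OF open_domain _ assms]
  note partials = has_derivative_partials[OF diff]
  note entry = bounded_linear_matrix_entry
  have x22: "py (\<lambda>q. omega_x q $ 2 $ 2) p = - \<i> * (py (px \<beta>) p + py f p)"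
    unfolding omega_x_def vector_3
    by (rule py_eq_derivative[THEN trans],
        (rule derivative_eq_intros partials smooth_on_px \<beta>_smooth smooth_f_g refl)+) simp
  have y22: "px (\<lambda>q. omega_y q $ 2 $ 2) p = \<i> * px g p"
    unfolding omega_y_def vector_3
    by (rule px_eq_derivative[THEN trans],
        (rule derivative_eq_intros partials smooth_f_g refl)+) simp
  have x23: "py (\<lambda>q. omega_x q $ 2 $ 3) p = - py (py v) p + \<i> * py g p"
    unfolding omega_x_def vector_3
    by (rule py_eq_derivative[THEN trans],
        (rule derivative_eq_intros partials smooth_on_py v_smooth smooth_f_g refl)+) simp
  have y23: "px (\<lambda>q. omega_y q $ 2 $ 3) p = px (px v) p + \<i> * px f p"
    unfolding omega_y_def vector_3
    by (rule px_eq_derivative[THEN trans],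
        (rule derivative_eq_intros partials smooth_on_px v_smooth smooth_f_g refl)+) simp
  have "(py omega_x p - px omega_y p) $ i $ j = py (\<lambda>q. omega_x q $ i $ j) p - px (\<lambda>q. omega_y q $ i $ j) p"
    for i j
    using py_linear[OF entry diff[OF smooth_omega(1)]] px_linear[OF entry diff[OF smooth_omega(2)]] by simp
  then show "- \<i> * (py (px \<beta>) p + py f p) - \<i> * px g p
      = (omega_x p ** cnj_transpose (omega_y p) - omega_y p ** cnj_transpose (omega_x p)) $ 2 $ 2"
    and "- py (py v) p + \<i> * py g p - (px (px v) p + \<i> * px f p)
      = (omega_x p ** cnj_transpose (omega_y p) - omega_y p ** cnj_transpose (omega_x p)) $ 2 $ 3"
    by (simp_all add: omega_structure_equation[OF assms, symmetric] x22 y22 x23 y23)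
qed

lemma codazzi_equations:
  assumes "p \<in> \<Omega>"
  shows "py (px \<beta>) p + py f p + px g p + 2 * (py v p * f p + px v p * g p) = 0"
    and "py g p - px f p = px \<beta> p * px v p - py \<beta> p * py v p + 2 * (f p * px v p - g p * py v p)"
  using arg_cong[OF structure_equation_entries(1)[OF assms], of Im]
    arg_cong[OF structure_equation_entries(2)[OF assms], of Im]
  by (simp_all add: omega_x_def omega_y_def matrix_matrix_mult_def cnj_transpose_def sum_3 algebra_simps)

lemma gauss_equation:
  assumes "p \<in> \<Omega>"
  shows "px (px v) p + py (py v) p + (exp (v p))\<^sup>2 - px \<beta> p * f p - py \<beta> p * g p
    - 2 * ((f p)\<^sup>2 + (g p)\<^sup>2) = 0"
  using arg_cong[OF structure_equation_entries(2)[OF assms], of Re] phase_norm_squared[of p]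
  by (simp add: omega_x_def omega_y_def matrix_matrix_mult_def cnj_transpose_def sum_3 algebra_simps
      power2_eq_square)

lemma codazzi_equation_U_V_1:
  assumes "p \<in> \<Omega>"
  shows "py (\<lambda>q. f q * exp (2 * v q)) p + px (\<lambda>q. g q * exp (2 * v q)) p
    + exp (2 * v p) * px (py \<beta>) p = 0"
proof -
  note diff = smooth_on_imp_differentiable[OF open_domain _ assms]
  have "py (px \<beta>) p = px (py \<beta>) p"
    by (rule smooth_on_schwarz[OF open_domain \<beta>_smooth assms])
  then have "py (\<lambda>q. f q * exp (2 * v q)) p + px (\<lambda>q. g q * exp (2 * v q)) p
      + exp (2 * v p) * px (py \<beta>) p
    = exp (2 * v p) * (py (px \<beta>) p + py f p + px g p + 2 * (py v p * f p + px v p * g p))"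
    unfolding py_mult_exp2[OF diff[OF smooth_f_g(1)] diff[OF v_smooth]]
      px_mult_exp2[OF diff[OF smooth_f_g(2)] diff[OF v_smooth]]
    by (simp add: algebra_simps)
  with codazzi_equations(1)[OF assms] show ?thesis
    by simp
qed

lemma codazzi_equation_U_V_2:
  assumes "p \<in> \<Omega>"
  shows "py (\<lambda>q. g q * exp (2 * v q)) p + py v p * exp (2 * v p) * py \<beta> p
    = px (\<lambda>q. f q * exp (2 * v q)) p + px v p * exp (2 * v p) * px \<beta> p"
proof -
  note diff = smooth_on_imp_differentiable[OF open_domain _ assms]
  have "py (\<lambda>q. g q * exp (2 * v q)) p + py v p * exp (2 * v p) * py \<beta> p
      = exp (2 * v p) * (py g p + py \<beta> p * py v p + 2 * g p * py v p)"
    "px (\<lambda>q. f q * exp (2 * v q)) p + px v p * exp (2 * v p) * px \<beta> p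
      = exp (2 * v p) * (px f p + px \<beta> p * px v p + 2 * f p * px v p)"
    unfolding py_mult_exp2[OF diff[OF smooth_f_g(2)] diff[OF v_smooth]]
      px_mult_exp2[OF diff[OF smooth_f_g(1)] diff[OF v_smooth]]
    by (simp_all add: algebra_simps)
  with codazzi_equations(2)[OF assms] show ?thesis
    by (simp add: algebra_simps)
qed

lemma gauss_equation_U_V:
  assumes "p \<in> \<Omega>"
  shows "px (px v) p + py (py v) p + exp (2 * v p)
    - 2 * ((f p * exp (2 * v p))\<^sup>2 + (g p * exp (2 * v p))\<^sup>2) * exp (- 4 * v p)
    - (px \<beta> p * (f p * exp (2 * v p)) + py \<beta> p * (g p * exp (2 * v p))) * exp (- 2 * v p) = 0"
proof -
  have exp2: "exp (2 * v p) = (exp (v p))\<^sup>2"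
    by (simp add: power2_eq_square flip: exp_add)
  have exp_neg: "exp (- 4 * v p) = inverse (exp (v p) ^ 4)" "exp (- 2 * v p) = inverse (exp (v p) ^ 2)"
    by (metis exp_minus exp_of_nat_mult mult_minus_left of_nat_numeral)+
  show ?thesis
    using gauss_equation[OF assms] unfolding exp2 exp_neg by (simp add: field_simps)
qed

end

theorem lemma1:
  fixes \<Omega> :: "(real \<times> real) set"
    and r :: "real \<times> real \<Rightarrow> complex^3"
    and v \<beta> f g :: "real \<times> real \<Rightarrow> real"
  assumes dom: "open \<Omega>" "connected \<Omega>"
    and r_smooth: "smooth_on \<Omega> r"
    and r_sphere: "\<forall>p\<in>\<Omega>. norm (r p) = 1"
    and horiz: "\<forall>p\<in>\<Omega>. herm (r p) (px r p) = 0 \<and> herm (r p) (py r p) = 0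
                       \<and> herm (px r p) (py r p) = 0"
    and conf: "\<forall>p\<in>\<Omega>. norm (px r p) = exp (v p) \<and> norm (py r p) = exp (v p)"
    and v_smooth: "smooth_on \<Omega> v"
    and \<beta>_smooth: "smooth_on \<Omega> \<beta>"
    and SU: "\<forall>p\<in>\<Omega>. SU3 (vector [exp (\<i> * complex_of_real (\<beta> p)) *s r p,
                                   exp (- v p) *\<^sub>R px r p,
                                   exp (- v p) *\<^sub>R py r p])"
    and f_def: "\<forall>p\<in>\<Omega>. \<i> * complex_of_real (f p)
                  = herm (px (\<lambda>q. exp (- v q) *\<^sub>R py r q) p) (exp (- v p) *\<^sub>R py r p)"
    and g_def: "\<forall>p\<in>\<Omega>. \<i> * complex_of_real (g p)
                  = herm (py (\<lambda>q. exp (- v q) *\<^sub>R px r q) p) (exp (- v p) *\<^sub>R px r p)"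
  shows "\<forall>p\<in>\<Omega>.
     py (\<lambda>q. f q * exp (2 * v q)) p + px (\<lambda>q. g q * exp (2 * v q)) p
       + exp (2 * v p) * px (py \<beta>) p = 0
   \<and> py (\<lambda>q. g q * exp (2 * v q)) p + py v p * exp (2 * v p) * py \<beta> p
       = px (\<lambda>q. f q * exp (2 * v q)) p + px v p * exp (2 * v p) * px \<beta> p
   \<and> px (px v) p + py (py v) p + exp (2 * v p)
       - 2 * ((f p * exp (2 * v p))\<^sup>2 + (g p * exp (2 * v p))\<^sup>2) * exp (- 4 * v p)
       - (px \<beta> p * (f p * exp (2 * v p)) + py \<beta> p * (g p * exp (2 * v p))) * exp (- 2 * v p) = 0"
proof -
  interpret lagrangian_frame \<Omega> r v \<beta> f g
    using dom(1) r_smooth v_smooth \<beta>_smooth SU f_def g_def by unfold_locales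
  show ?thesis
    using codazzi_equation_U_V_1 codazzi_equation_U_V_2 gauss_equation_U_V by blast
qed

end
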